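(* Let $SS=(S(a_i))_{i\ge1}$ be a system of grids without multiple zeroes, let $n\ge1$, $q\ge0$ be integers, and let $\alpha=\sum_{i=1}^n 1/a_i$ be the density of zeroes of an $n$-filling of the first $n$ grids having no zero of multiplicity greater than one; assume $0<\alpha<1$. Then $$msr_n(q)\;<\;\frac{n+q}{1-\alpha}+1,$$ and this majorant is unimprovable.
   Context: A grid $S(a)$ of module $a\in\mathbb N$, $a\ge1$, with shift $k\in\mathbb Z$ is the sequence $(l_j)_{j\in\mathbb Z}$ with $l_j=0$ iff $j\equiv k\pmod a$ and $l_j=1$ otherwise. The product of grids is the elementwise logical AND. An $n$-filling with modules $a_1,\dots,a_n$ is a product of grids $S(a_1),\dots,S(a_n)$ (arbitrary shifts) such that omitting any one grid changes the product. A system of grids is an infinite sequence of grids with nondecreasing modules such that for each $n$ the first $n$ grids form an $n$-filling. A zero of a filling at position $j$ has multiplicity $k$ if exactly $k$ of the generating grids have a zero at $j$. A system is without multiple zeroes if for every $n$ there is an $n$-filling of its first $n$ grids in which every zero has multiplicity $1$. A $q$-series is a segment between positions $i<k$ with $l_i=l_k=1$ and exactly $q$ ones strictly between them; its length is $k-i$. $msr_n(q)$ is the supremum over all $n$-fillings with modules $a_1,\dots,a_n$ (all shifts) of the largest length of a $q$-series. *)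

theory Defs
  imports Complex_Main "HOL-Library.Extended_Real"
begin

text \<open>Grids are indexed from 0: grid number i+1 of the paper is (a i, k i),
  with module a i and shift k i. The value True encodes 1, False encodes 0.\<close>

definition grid_val :: "nat \<Rightarrow> int \<Rightarrow> int \<Rightarrow> bool" where
  "grid_val a k j \<longleftrightarrow> j mod int a \<noteq> k mod int a"

definition prod_val :: "(nat \<Rightarrow> nat) \<Rightarrow> (nat \<Rightarrow> int) \<Rightarrow> nat set \<Rightarrow> int \<Rightarrow> bool" where
  "prod_val a k I j \<longleftrightarrow> (\<forall>i\<in>I. grid_val (a i) (k i) j)"

definition is_filling :: "(nat \<Rightarrow> nat) \<Rightarrow> (nat \<Rightarrow> int) \<Rightarrow> nat \<Rightarrow> bool" where
  "is_filling a k n \<longleftrightarrow> (\<forall>i<n. a i \<ge> 1) \<and>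
     (\<forall>m<n. prod_val a k ({..<n} - {m}) \<noteq> prod_val a k {..<n})"

definition grid_system :: "(nat \<Rightarrow> nat) \<Rightarrow> (nat \<Rightarrow> int) \<Rightarrow> bool" where
  "grid_system a k \<longleftrightarrow> (\<forall>i. a i \<ge> 1) \<and> mono a \<and> (\<forall>n. is_filling a k n)"

definition zero_mult :: "(nat \<Rightarrow> nat) \<Rightarrow> (nat \<Rightarrow> int) \<Rightarrow> nat \<Rightarrow> int \<Rightarrow> nat" where
  "zero_mult a k n j = card {i. i < n \<and> \<not> grid_val (a i) (k i) j}"

definition no_multiple_zeroes :: "(nat \<Rightarrow> nat) \<Rightarrow> bool" where
  "no_multiple_zeroes a \<longleftrightarrow>
     (\<forall>n. \<exists>k'. is_filling a k' n \<and> (\<forall>j. zero_mult a k' n j \<le> 1))"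

definition q_series :: "(int \<Rightarrow> bool) \<Rightarrow> nat \<Rightarrow> int \<Rightarrow> int \<Rightarrow> bool" where
  "q_series l q i k \<longleftrightarrow> i < k \<and> l i \<and> l k \<and> card {j. i < j \<and> j < k \<and> l j} = q"

definition msr :: "(nat \<Rightarrow> nat) \<Rightarrow> nat \<Rightarrow> nat \<Rightarrow> ereal" where
  "msr a n q = (SUP p \<in> {(s, i, k). is_filling a s n \<and> q_series (prod_val a s {..<n}) q i k}.
                  ereal (real_of_int (snd (snd p) - fst (snd p))))"

definition zero_density :: "(nat \<Rightarrow> nat) \<Rightarrow> nat \<Rightarrow> real" where
  "zero_density a n = (\<Sum>i<n. 1 / real (a i))"

end

theory Submission
  imports Defs
begin

text \<open>Inside a q-series from i to k the k - i - 1 interior cells are the q ones and the zeroes;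
  the zeroes of grid t lie in one residue class mod a t, which meets an interval of length
  k - i - 1 in at most (k - i - 2) / a t + 1 points. Summing over t gives
  k - i - 1 \<le> q + n + \<alpha> (k - i - 2), i.e. (k - i - 1)(1 - \<alpha>) \<le> n + q - \<alpha> < n + q;
  this holds for every filling, multiple zeroes or not.
  For sharpness take the modules 2^(i+c): the shifts 2^i - 1 make them a system without multiple
  zeroes, while the shifts 0, \<dots>, n - 1 (msr ranges over all shifts) put the n zeroes next to
  each other, so that -1 and n + q bound a q-series of length n + q + 1. As c \<rightarrow> \<infinity> the
  density tends to 0, and the bound tends to n + q + 1.\<close>

lemma card_residue_class_in_interval:
  fixes a :: nat and r i k :: int
  assumes a: "a \<ge> 1" and ik: "i < k"
  shows "int a * int (card {j. i < j \<and> j < k \<and> j mod int a = r}) \<le> k - i - 2 + int a"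
proof (cases "{j. i < j \<and> j < k \<and> j mod int a = r} = {}")
  case True
  then have "card {j. i < j \<and> j < k \<and> j mod int a = r} = 0" by (simp only: card.empty)
  then show ?thesis using a ik by simp
next
  case False
  define Z where "Z = {j. i < j \<and> j < k \<and> j mod int a = r}"
  have fin: "finite Z" unfolding Z_def by (rule finite_subset[of _ "{i<..<k}"]) auto
  define lo where "lo = Min Z"
  define hi where "hi = Max Z"
  have "Z \<noteq> {}" using False by (simp add: Z_def)
  then have loZ: "lo \<in> Z" and hiZ: "hi \<in> Z" using fin by (simp_all add: lo_def hi_def)
  have ap: "int a > 0" using a by simp
  have rep: "j = int a * (j div int a) + r" if "j \<in> Z" for j
    using that div_mult_mod_eq[of j "int a"] by (simp add: Z_def mult.commute)
  have "inj_on (\<lambda>j. j div int a) Z"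
    by (rule inj_onI) (metis rep)
  then have "card Z = card ((\<lambda>j. j div int a) ` Z)" by (simp add: card_image)
  also have "\<dots> \<le> card {lo div int a .. hi div int a}"
    using fin ap by (intro card_mono) (auto simp: lo_def hi_def intro!: zdiv_mono1)
  finally have "card Z \<le> nat (hi div int a - lo div int a + 1)" by simp
  moreover have "lo div int a \<le> hi div int a"
    using fin loZ ap by (simp add: hi_def zdiv_mono1)
  ultimately have "int (card Z) \<le> hi div int a - lo div int a + 1" by linarith
  then have "int a * int (card Z) \<le> int a * (hi div int a - lo div int a + 1)"
    using ap by (intro mult_left_mono) simp_all
  also have "\<dots> = int a * (hi div int a - lo div int a) + int a"
    by (simp add: algebra_simps)
  also have "\<dots> = hi - lo + int a"
    using rep[OF loZ] rep[OF hiZ] by (simp add: algebra_simps)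
  also have "\<dots> \<le> k - i - 2 + int a" using loZ hiZ by (simp add: Z_def)
  finally show ?thesis by (simp add: Z_def)
qed

lemma q_series_interior_count:
  assumes a: "\<forall>t<n. a t \<ge> 1" and qs: "q_series (prod_val a s {..<n}) q i k"
  shows "real_of_int (k - i - 1) \<le> real q + real n + zero_density a n * real_of_int (k - i - 2)"
proof -
  define l where "l = prod_val a s {..<n}"
  define Os where "Os = {j. i < j \<and> j < k \<and> l j}"
  define Zs where "Zs = {j. i < j \<and> j < k \<and> \<not> l j}"
  define C where "C t = {j. i < j \<and> j < k \<and> j mod int (a t) = s t mod int (a t)}" for t
  have ik: "i < k" and cO: "card Os = q" using qs by (auto simp: q_series_def Os_def l_def)
  have "{i<..<k} = Os \<union> Zs" by (auto simp: Os_def Zs_def)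
  moreover have "finite Os" "finite Zs"
    by (rule finite_subset[of _ "{i<..<k}"], auto simp: Os_def Zs_def)+
  ultimately have "card {i<..<k} = card Os + card Zs"
    by (simp add: card_Un_disjoint disjoint_iff Os_def Zs_def)
  then have interior: "real_of_int (k - i - 1) = real q + real (card Zs)" using ik cO by simp
  have "Zs \<subseteq> (\<Union>t<n. C t)"
    by (auto simp: Zs_def C_def l_def prod_val_def grid_val_def)
  moreover have "finite (\<Union>t<n. C t)" by (rule finite_subset[of _ "{i<..<k}"]) (auto simp: C_def)
  ultimately have "card Zs \<le> card (\<Union>t<n. C t)" by (rule card_mono[rotated])
  also have "\<dots> \<le> (\<Sum>t<n. card (C t))" by (rule card_UN_le) simp
  finally have "real (card Zs) \<le> (\<Sum>t<n. real (card (C t)))" by (simp flip: of_nat_sum)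
  also have "\<dots> \<le> (\<Sum>t<n. 1 / real (a t) * real_of_int (k - i - 2) + 1)"
  proof (rule sum_mono)
    fix t assume "t \<in> {..<n}"
    then have at: "a t \<ge> 1" using a by simp
    have "real_of_int (int (a t) * int (card (C t))) \<le> real_of_int (k - i - 2 + int (a t))"
      unfolding of_int_le_iff C_def by (rule card_residue_class_in_interval[OF at ik])
    then show "real (card (C t)) \<le> 1 / real (a t) * real_of_int (k - i - 2) + 1"
      using at by (simp add: field_simps)
  qed
  also have "\<dots> = zero_density a n * real_of_int (k - i - 2) + real n"
    by (simp add: zero_density_def sum.distrib sum_distrib_right)
  finally show ?thesis using interior by linarith
qed

lemma q_series_length_less:
  assumes a: "\<forall>t<n. a t \<ge> 1" and qs: "q_series (prod_val a s {..<n}) q i k"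
    and pos: "0 < zero_density a n" and less1: "zero_density a n < 1"
  shows "real_of_int (k - i) < (real n + real q) / (1 - zero_density a n) + 1"
proof -
  define \<alpha> where "\<alpha> = zero_density a n"
  have "(real_of_int (k - i) - 1) * (1 - \<alpha>) \<le> real n + real q - \<alpha>"
    using q_series_interior_count[OF a qs] by (simp add: \<alpha>_def algebra_simps)
  also have "\<dots> < real n + real q" using pos by (simp add: \<alpha>_def)
  finally have "real_of_int (k - i) - 1 < (real n + real q) / (1 - \<alpha>)"
    using less1 by (simp add: \<alpha>_def pos_less_divide_eq)
  then show ?thesis by (simp add: \<alpha>_def)
qed

text \<open>The lengths are integers, so their supremum stays at most \<lceil>B\<rceil> - 1 and the bound remains strict.\<close>

lemma msr_less:
  assumes pos: "0 < zero_density a n" and less1: "zero_density a n < 1"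
  shows "msr a n q < ereal ((real n + real q) / (1 - zero_density a n) + 1)"
proof -
  define B where "B = (real n + real q) / (1 - zero_density a n) + 1"
  have "msr a n q \<le> ereal (real_of_int (\<lceil>B\<rceil> - 1))"
    unfolding msr_def
  proof (rule SUP_least)
    fix p assume "p \<in> {(s, i, k). is_filling a s n \<and> q_series (prod_val a s {..<n}) q i k}"
    then obtain s i k where p: "p = (s, i, k)"
      and fill: "is_filling a s n" and qs: "q_series (prod_val a s {..<n}) q i k"
      by auto
    have "\<forall>t<n. a t \<ge> 1" using fill by (simp add: is_filling_def)
    then have "real_of_int (k - i) < B"
      unfolding B_def using q_series_length_less qs pos less1 by blast
    then have "k - i \<le> \<lceil>B\<rceil> - 1" by (simp add: less_ceiling_iff)
    then show "ereal (real_of_int (snd (snd p) - fst (snd p))) \<le> ereal (real_of_int (\<lceil>B\<rceil> - 1))"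
      by (simp add: p)
  qed
  also have "\<dots> < ereal B" using ceiling_correct[of B] by simp
  finally show ?thesis by (simp add: B_def)
qed

lemma msr_ge_q_series_length:
  assumes "is_filling a s n" and "q_series (prod_val a s {..<n}) q i k"
  shows "ereal (real_of_int (k - i)) \<le> msr a n q"
proof -
  have "(s, i, k) \<in> {(s, i, k). is_filling a s n \<and> q_series (prod_val a s {..<n}) q i k}"
    using assms by simp
  then show ?thesis unfolding msr_def by (rule SUP_upper2) simp
qed

lemma is_filling_if_zeroes_disjoint:
  assumes a: "\<forall>i<n. a i \<ge> 1"
    and disj: "\<And>t u j. t < n \<Longrightarrow> u < n \<Longrightarrow> \<not> grid_val (a t) (k t) j \<Longrightarrow>
                 \<not> grid_val (a u) (k u) j \<Longrightarrow> t = u"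
  shows "is_filling a k n"
  unfolding is_filling_def
proof (intro conjI a allI impI)
  fix m assume m: "m < n"
  have zero_m: "\<not> grid_val (a m) (k m) (k m)" by (simp add: grid_val_def)
  then have "\<not> prod_val a k {..<n} (k m)" using m by (auto simp: prod_val_def)
  moreover have "prod_val a k ({..<n} - {m}) (k m)"
    using disj[OF _ m _ zero_m] by (auto simp: prod_val_def)
  ultimately show "prod_val a k ({..<n} - {m}) \<noteq> prod_val a k {..<n}" by metis
qed

lemma zero_mult_le_1_if_zeroes_disjoint:
  assumes "\<And>t u. t < n \<Longrightarrow> u < n \<Longrightarrow> \<not> grid_val (a t) (k t) j \<Longrightarrow>
             \<not> grid_val (a u) (k u) j \<Longrightarrow> t = u"
  shows "zero_mult a k n j \<le> 1"
  unfolding zero_mult_def using assms by (subst One_nat_def, subst card_le_Suc0_iff_eq) auto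

definition dyadic_module :: "nat \<Rightarrow> nat \<Rightarrow> nat" where
  "dyadic_module c i = 2 ^ (i + c)"

text \<open>The modules are nested (each divides the next), so a common zero of grids t < u would make
  their shifts congruent modulo the smaller module.\<close>

lemma dyadic_zeroes_disjoint:
  fixes r :: "nat \<Rightarrow> int"
  assumes r: "\<And>t u. t < u \<Longrightarrow> u < n \<Longrightarrow> \<not> 2 ^ (t + c) dvd r u - r t"
    and "t < n" "u < n"
    and "\<not> grid_val (dyadic_module c t) (r t) j" "\<not> grid_val (dyadic_module c u) (r u) j"
  shows "t = u"
proof -
  have common_zero: "2 ^ (t + c) dvd r u - r t"
    if "t < u" "j mod 2 ^ (t + c) = r t mod 2 ^ (t + c)" "j mod 2 ^ (u + c) = r u mod 2 ^ (u + c)"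
    for t u
  proof -
    have "(2::int) ^ (t + c) dvd 2 ^ (u + c)" using \<open>t < u\<close> by (simp add: le_imp_power_dvd)
    then have "r u mod 2 ^ (t + c) = r t mod 2 ^ (t + c)"
      using that by (metis mod_mod_cancel)
    then show ?thesis by (simp add: mod_eq_dvd_iff)
  qed
  show ?thesis
    using assms common_zero[of t u] common_zero[of u t]
    by (cases t u rule: linorder_cases) (auto simp: grid_val_def dyadic_module_def)
qed

lemma dyadic_grid_system:
  assumes c: "c \<ge> 1"
  shows "grid_system (dyadic_module c) (\<lambda>i. 2 ^ i - 1) \<and> no_multiple_zeroes (dyadic_module c)"
proof -
  have shifts: "\<not> (2::int) ^ (t + c) dvd (2 ^ u - 1) - (2 ^ t - 1)" if tu: "t < u" for t u
  proof
    assume dvd: "(2::int) ^ (t + c) dvd (2 ^ u - 1) - (2 ^ t - 1)"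
    have "(2::int) ^ u - 1 - (2 ^ t - 1) = 2 ^ t * (2 ^ (u - t) - 1)"
      using tu by (simp add: right_diff_distrib flip: power_add)
    with dvd have "(2::int) ^ t * 2 ^ c dvd 2 ^ t * (2 ^ (u - t) - 1)" by (simp add: power_add)
    then have "(2::int) ^ c dvd 2 ^ (u - t) - 1" by simp
    moreover have "(2::int) dvd 2 ^ c" using c by simp
    ultimately have "(2::int) dvd 2 ^ (u - t) - 1" by (rule dvd_trans[rotated])
    then show False using tu by simp
  qed
  have disj: "t = u"
    if "t < n" "u < n" "\<not> grid_val (dyadic_module c t) (2 ^ t - 1) j"
      "\<not> grid_val (dyadic_module c u) (2 ^ u - 1) j" for n t u j
    using shifts that by (rule dyadic_zeroes_disjoint[where r = "\<lambda>i. 2 ^ i - 1"])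
  have "is_filling (dyadic_module c) (\<lambda>i. 2 ^ i - 1) n" for n
    using disj by (intro is_filling_if_zeroes_disjoint) (simp_all add: dyadic_module_def)
  moreover have "zero_mult (dyadic_module c) (\<lambda>i. 2 ^ i - 1) n j \<le> 1" for n j
    using disj by (intro zero_mult_le_1_if_zeroes_disjoint)
  moreover have "mono (dyadic_module c)" by (simp add: mono_def dyadic_module_def power_increasing)
  ultimately show ?thesis
    by (auto simp: grid_system_def no_multiple_zeroes_def dyadic_module_def)
qed

lemma grid_val_dyadic_consecutive:
  assumes "n + q < 2 ^ c" and "t < n" and "-1 \<le> j" "j \<le> int (n + q)"
  shows "grid_val (dyadic_module c t) (int t) j \<longleftrightarrow> j \<noteq> int t"
proof -
  have "int (n + q) < 2 ^ c" using assms(1) by (metis of_nat_less_iff of_nat_numeral of_nat_power)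
  also have "(2::int) ^ c \<le> 2 ^ (t + c)" by (simp add: power_increasing)
  finally have big: "\<bar>j - int t\<bar> < 2 ^ (t + c)" using assms by linarith
  have "\<not> 2 ^ (t + c) dvd j - int t" if "j \<noteq> int t"
    using dvd_imp_le_int[of "j - int t" "2 ^ (t + c)"] big that by auto
  then show ?thesis by (auto simp: grid_val_def dyadic_module_def mod_eq_dvd_iff)
qed

lemma dyadic_consecutive_q_series:
  assumes nq: "n + q < 2 ^ c"
  shows "is_filling (dyadic_module c) int n"
    and "q_series (prod_val (dyadic_module c) int {..<n}) q (-1) (int (n + q))"
proof -
  have "\<not> 2 ^ (t + c) dvd int u - int t" if "t < u" "u < n" for t u
  proof
    assume dvd: "2 ^ (t + c) dvd int u - int t"
    have "u < 2 ^ c" using that nq by linarith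
    then have "int u < 2 ^ c" by (metis of_nat_less_iff of_nat_numeral of_nat_power)
    moreover have "0 < int u - int t" using that by simp
    with dvd have "2 ^ (t + c) \<le> int u - int t" by (rule zdvd_imp_le)
    moreover have "(2::int) ^ c \<le> 2 ^ (t + c)" by (rule power_increasing) simp_all
    ultimately show False by linarith
  qed
  then show "is_filling (dyadic_module c) int n"
    by (intro is_filling_if_zeroes_disjoint dyadic_zeroes_disjoint[where r = int])
       (auto simp: dyadic_module_def)
  define l where "l = prod_val (dyadic_module c) int {..<n}"
  have l: "l j \<longleftrightarrow> j \<notin> {0..<int n}" if "-1 \<le> j" "j \<le> int (n + q)" for j
  proof -
    have "l j \<longleftrightarrow> (\<forall>t<n. j \<noteq> int t)"
      using grid_val_dyadic_consecutive[OF nq _ that] by (auto simp: l_def prod_val_def)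
    also have "\<dots> \<longleftrightarrow> j \<notin> {0..<int n}"
    proof
      assume "\<forall>t<n. j \<noteq> int t"
      then show "j \<notin> {0..<int n}" by (metis atLeastLessThan_iff nat_0_le nat_less_iff)
    qed auto
    finally show ?thesis .
  qed
  have "{j. -1 < j \<and> j < int (n + q) \<and> l j} = {int n..<int (n + q)}"
  proof (rule set_eqI)
    fix j
    show "j \<in> {j. -1 < j \<and> j < int (n + q) \<and> l j} \<longleftrightarrow> j \<in> {int n..<int (n + q)}"
      by (cases "-1 < j \<and> j < int (n + q)") (auto simp: l)
  qed
  then show "q_series l q (-1) (int (n + q))"
    using l[of "-1"] l[of "int (n + q)"] by (simp add: q_series_def)
qed

lemma zero_density_dyadic_tendsto: "(\<lambda>c. zero_density (dyadic_module c) n) \<longlonglongrightarrow> 0"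
proof -
  have "(\<lambda>c. (1 / 2) ^ i * (1 / 2) ^ c :: real) \<longlonglongrightarrow> (1 / 2) ^ i * 0" for i
    by (intro tendsto_mult tendsto_const LIMSEQ_realpow_zero) simp_all
  then have "(\<lambda>c. 1 / real (dyadic_module c i)) \<longlonglongrightarrow> 0" for i
    by (simp add: dyadic_module_def power_add power_one_over)
  then show ?thesis
    unfolding zero_density_def by (rule tendsto_null_sum)
qed

lemma eventually_dyadic_near_extremal:
  fixes \<epsilon> :: real
  assumes "\<epsilon> > 0"
  shows "\<forall>\<^sub>F c in sequentially. c \<ge> 1 \<and> n + q < 2 ^ c \<and> zero_density (dyadic_module c) n < 1 \<and>
           (real n + real q) / (1 - zero_density (dyadic_module c) n) < real n + real q + \<epsilon>"
proof -
  note \<alpha> = zero_density_dyadic_tendsto[of n]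
  have "\<forall>\<^sub>F c in sequentially. c \<ge> 1 \<and> n + q < 2 ^ c"
    unfolding eventually_sequentially
  proof (intro exI allI impI)
    fix c assume c: "n + q + 1 \<le> c"
    have "n + q < 2 ^ (n + q)" by (rule less_exp)
    also have "\<dots> \<le> 2 ^ c" using c by (simp add: power_increasing)
    finally show "c \<ge> 1 \<and> n + q < 2 ^ c" using c by simp
  qed
  moreover have "\<forall>\<^sub>F c in sequentially. zero_density (dyadic_module c) n < 1"
    using \<alpha> by (rule order_tendstoD(2)) simp
  moreover have "(\<lambda>c. (real n + real q) / (1 - zero_density (dyadic_module c) n))
      \<longlonglongrightarrow> (real n + real q) / (1 - 0)"
    using \<alpha> by (intro tendsto_divide tendsto_diff tendsto_const) simp_all
  then have "\<forall>\<^sub>F c in sequentially.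
      (real n + real q) / (1 - zero_density (dyadic_module c) n) < real n + real q + \<epsilon>"
    by (rule order_tendstoD(2)) (use assms in simp)
  ultimately show ?thesis by eventually_elim blast
qed

theorem theorem3:
  fixes n q :: nat
  assumes "n \<ge> 1"
  shows "(\<forall>a k. grid_system a k \<and> no_multiple_zeroes a \<and>
            0 < zero_density a n \<and> zero_density a n < 1 \<longrightarrow>
            msr a n q < ereal ((real n + real q) / (1 - zero_density a n) + 1))
       \<and> (\<forall>\<epsilon>>0. \<exists>a k. grid_system a k \<and> no_multiple_zeroes a \<and>
            0 < zero_density a n \<and> zero_density a n < 1 \<and>
            msr a n q > ereal ((real n + real q) / (1 - zero_density a n) + 1 - \<epsilon>))"
proof (intro conjI allI impI)
  fix \<epsilon> :: real assume "\<epsilon> > 0"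
  then obtain c where c: "c \<ge> 1" and nq: "n + q < 2 ^ c"
    and less1: "zero_density (dyadic_module c) n < 1"
    and close: "(real n + real q) / (1 - zero_density (dyadic_module c) n) < real n + real q + \<epsilon>"
    using eventually_happens'[OF sequentially_bot eventually_dyadic_near_extremal] by blast
  have pos: "0 < zero_density (dyadic_module c) n"
    using assms by (auto simp: zero_density_def dyadic_module_def lessThan_empty_iff intro!: sum_pos)
  have "ereal (real n + real q + 1) \<le> msr (dyadic_module c) n q"
    using msr_ge_q_series_length[OF dyadic_consecutive_q_series[OF nq]] by simp
  with close have "ereal ((real n + real q) / (1 - zero_density (dyadic_module c) n) + 1 - \<epsilon>)
      < msr (dyadic_module c) n q"
    by (simp add: less_le_trans[rotated])
  then show "\<exists>a k. grid_system a k \<and> no_multiple_zeroes a \<and>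
            0 < zero_density a n \<and> zero_density a n < 1 \<and>
            msr a n q > ereal ((real n + real q) / (1 - zero_density a n) + 1 - \<epsilon>)"
    using dyadic_grid_system[OF c] pos less1 by blast
qed (simp add: msr_less)

end
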